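(* Let $0<p<1$, $0\le\ell<\infty$, and let $f$ be a measurable, non-negative, non-increasing function on $(\ell,\infty)$. Then $$\int_\ell^\infty\Big(\frac1x\int_x^\infty f(y)dy\Big)^p dx\le p\int_\ell^\infty f^p(x)\Big(\int_{\ell/x}^1 t^{-p}(1-t)^{p-1}dt\Big)dx,$$ and the constant $p$ is sharp. In particular, for $\ell=0$, $$\int_0^\infty\Big(\frac1x\int_x^\infty f(y)dy\Big)^p dx\le\frac{\pi p}{\sin\pi p}\int_0^\infty f^p(x)dx$$ for all non-negative non-increasing $f$ on $(0,\infty)$, and the constant $\frac{\pi p}{\sin \pi p}$ is sharp. *)

theory Defs
  imports "HOL-Analysis.Analysis"
begin

definition ennpowr :: "ennreal \<Rightarrow> real \<Rightarrow> ennreal" where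
  "ennpowr a q = (if a = \<infinity> then \<infinity> else ennreal (enn2real a powr q))"

definition hardy_lhs :: "real \<Rightarrow> real \<Rightarrow> (real \<Rightarrow> real) \<Rightarrow> ennreal" where
  "hardy_lhs l p f =
     (\<integral>\<^sup>+ x \<in> {l<..}. ennpowr ((\<integral>\<^sup>+ y \<in> {x<..}. ennreal (f y) \<partial>lborel) / ennreal x) p \<partial>lborel)"

definition hardy_weight :: "real \<Rightarrow> real \<Rightarrow> real \<Rightarrow> ennreal" where
  "hardy_weight l p x =
     (\<integral>\<^sup>+ t \<in> {l/x<..<1}. ennreal (t powr (-p) * (1 - t) powr (p - 1)) \<partial>lborel)"

definition hardy_rhs :: "real \<Rightarrow> real \<Rightarrow> (real \<Rightarrow> real) \<Rightarrow> ennreal" where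
  "hardy_rhs l p f =
     (\<integral>\<^sup>+ x \<in> {l<..}. ennreal (f x powr p) * hardy_weight l p x \<partial>lborel)"

definition admissible :: "real \<Rightarrow> (real \<Rightarrow> real) \<Rightarrow> bool" where
  "admissible l f \<longleftrightarrow>
     set_borel_measurable lborel {l<..} f \<and>
     (\<forall>x>l. 0 \<le> f x) \<and>
     (\<forall>x y. l < x \<longrightarrow> x \<le> y \<longrightarrow> f y \<le> f x)"

end

theory Submission
  imports Defs
begin

(* Fix x > l and let G(s) be the integral of f over (x, s). As f is non-increasing,
   G(s) >= f(s) (s - x), hence f(s) G(s)^(p-1) <= f(s)^p (s - x)^(p-1). Writing
   G(s)^(p-1) = (1 - p) * int_{G(s)}^oo y^(p-2) dy and exchanging the integrals, the integral
   of the left side over s > x becomes (1 - p) * int y^(p-2) J(y) dy, where J(y), the integral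
   of f over {G <= y}, is at least min(y, G(oo)) because G is continuous. Since
   int_0^oo y^(p-2) min(y, c) dy = c^p / (p (1 - p)), this yields
   (int_x^oo f)^p <= p * int_x^oo f(s)^p (s - x)^(p-1) ds.
   Multiplying by x^(-p), integrating over x > l and exchanging the integrals once more gives
   the weighted inequality, the weight appearing after the substitution x = s t.
   For the indicator of (l, b] the pointwise inequality is an equality, so p is sharp;
   for l = 0 the weight is the constant B(1 - p, p) = pi / sin (pi p). *)

lemma pred_mem_greaterThan [measurable]:
  fixes f g :: "'a \<Rightarrow> real"
  assumes [measurable]: "f \<in> borel_measurable M" "g \<in> borel_measurable M"
  shows "Measurable.pred M (\<lambda>z. f z \<in> {g z<..})"
  unfolding greaterThan_iff by measurable

lemma pred_mem_atLeast [measurable]: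
  fixes f g :: "'a \<Rightarrow> real"
  assumes [measurable]: "f \<in> borel_measurable M" "g \<in> borel_measurable M"
  shows "Measurable.pred M (\<lambda>z. f z \<in> {g z..})"
  unfolding atLeast_iff by measurable

lemma set_borel_measurable_extend:
  fixes f :: "real \<Rightarrow> real"
  assumes "set_borel_measurable lborel A f"
  shows "(\<lambda>y. indicator A y * f y) \<in> borel_measurable borel"
proof -
  have "(\<lambda>y. indicator A y *\<^sub>R f y) \<in> borel_measurable lborel"
    using assms by (simp add: set_borel_measurable_def)
  then show ?thesis
    by (simp cong: measurable_cong_sets)
qed

lemma ennpowr_ennreal: "0 \<le> a \<Longrightarrow> ennpowr (ennreal a) q = ennreal (a powr q)"
  by (simp add: ennpowr_def)

lemma ennpowr_zero [simp]: "ennpowr 0 q = 0"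
  using ennpowr_ennreal[of 0 q] by simp

lemma ennpowr_divide_ennreal:
  assumes "0 < x"
  shows "ennpowr (F / ennreal x) p = ennreal (x powr -p) * ennpowr F p"
proof (cases F)
  case (real c)
  then have "(c / x) powr p = x powr -p * c powr p"
    using assms by (simp add: powr_divide powr_minus_divide)
  with real assms show ?thesis
    by (simp add: divide_ennreal ennpowr_ennreal ennreal_mult[symmetric])
qed (use assms in \<open>simp add: ennpowr_def ennreal_top_divide ennreal_mult_top\<close>)

lemma ennpowr_leI:
  assumes "0 < p" and le: "\<And>c. 0 < c \<Longrightarrow> ennreal c \<le> a \<Longrightarrow> ennreal (c powr p) \<le> b"
  shows "ennpowr a p \<le> b"
proof (cases a)
  case (real c)
  show ?thesis
  proof (cases "c = 0")
    case True
    then show ?thesis using real by simp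
  next
    case False
    then have "ennreal (c powr p) \<le> b"
      using real by (intro le) auto
    moreover have "ennpowr a p = ennreal (c powr p)"
      using real by (simp add: ennpowr_ennreal)
    ultimately show ?thesis by (simp only:)
  qed
next
  case top
  have "b = \<infinity>"
  proof (rule ccontr)
    assume "b \<noteq> \<infinity>"
    then have "b < top"
      by (simp add: less_top)
    then obtain n :: nat where n: "b < of_nat n"
      using ennreal_Ex_less_of_nat by blast
    then have "0 < n"
      by (cases n) auto
    have "(real n powr (1/p)) powr p = real n"
      using \<open>0 < p\<close> by (simp add: powr_powr)
    then have "ennreal (real n) \<le> b"
      using le[of "real n powr (1/p)"] top \<open>0 < n\<close> by simp
    then show False
      using n by (simp add: ennreal_of_nat_eq_real_of_nat)
  qed
  with top show ?thesis by simp
qed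

lemma ennreal_mult_strict_right_mono_real:
  assumes "c < K" "0 < K" "0 < R" "R < \<infinity>"
  shows "ennreal c * R < ennreal K * R"
  using assms by (intro ennreal_mult_strict_right_mono ennreal_lessI) auto

section \<open>Power integrals\<close>

lemma nn_integral_powr_head:
  assumes "-1 < a" "0 \<le> c"
  shows "(\<integral>\<^sup>+ y\<in>{0..c}. ennreal (y powr a) \<partial>lborel) = ennreal (c powr (a + 1) / (a + 1))"
  using assms by (intro nn_integral_has_integral_lebesgue' has_integral_powr_from_0) auto

lemma nn_integral_powr_tail:
  assumes "a < -1" "0 < c"
  shows "(\<integral>\<^sup>+ y\<in>{c..}. ennreal (y powr a) \<partial>lborel) = ennreal (c powr (a + 1) / (- a - 1))"
proof -
  have "(\<integral>\<^sup>+ y\<in>{c..}. ennreal (y powr a) \<partial>lborel) = ennreal (- (c powr (a + 1)) / (a + 1))"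
    using assms by (intro nn_integral_has_integral_lebesgue' has_integral_powr_to_inf) auto
  also have "- (c powr (a + 1)) / (a + 1) = c powr (a + 1) / (- a - 1)"
    using assms by (simp add: field_simps)
  finally show ?thesis .
qed

lemma nn_integral_powr_shift:
  assumes "x < b" "0 < p"
  shows "(\<integral>\<^sup>+ s\<in>{x<..b}. ennreal ((s - x) powr (p - 1)) \<partial>lborel) = ennreal ((b - x) powr p / p)"
proof -
  have "(\<integral>\<^sup>+ s\<in>{x<..b}. ennreal ((s - x) powr (p - 1)) \<partial>lborel)
      = (\<integral>\<^sup>+ s. ennreal ((s - x) powr (p - 1)) * indicator {x..b} s \<partial>lborel)"
    by (rule nn_integral_cong_AE)
       (use AE_lborel_singleton[of x] in \<open>eventually_elim, auto simp: indicator_def\<close>)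
  also have "\<dots> = (\<integral>\<^sup>+ u. ennreal (u powr (p - 1)) * indicator {0..b - x} u \<partial>lborel)"
    using nn_integral_real_affine[of "\<lambda>s. ennreal ((s - x) powr (p - 1)) * indicator {x..b} s" 1 x]
    by (simp add: indicator_def add.commute le_diff_eq)
  also have "\<dots> = ennreal ((b - x) powr p / p)"
    using nn_integral_powr_head[of "p - 1" "b - x"] assms by simp
  finally show ?thesis .
qed

lemma nn_integral_powr_min:
  assumes "0 < p" "p < 1" "0 < c"
  shows "(\<integral>\<^sup>+ y. ennreal (y powr (p - 2)) * min (ennreal y) (ennreal c) \<partial>lborel)
       = ennreal (c powr p / (p * (1 - p)))"
  \<comment> \<open>the integrand vanishes for \<open>y \<le> 0\<close>, where \<open>ennreal y = 0\<close>\<close>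
proof -
  have "(\<integral>\<^sup>+ y. ennreal (y powr (p - 2)) * min (ennreal y) (ennreal c) \<partial>lborel)
      = (\<integral>\<^sup>+ y. ennreal (y powr (p - 1)) * indicator {0..c} y
                 + ennreal c * (ennreal (y powr (p - 2)) * indicator {c..} y) \<partial>lborel)"
  proof (rule nn_integral_cong_AE)
    show "AE y in lborel. ennreal (y powr (p - 2)) * min (ennreal y) (ennreal c)
        = ennreal (y powr (p - 1)) * indicator {0..c} y
          + ennreal c * (ennreal (y powr (p - 2)) * indicator {c..} y)"
      using AE_lborel_singleton[of c]
    proof eventually_elim
      case (elim y)
      show ?case
      proof (cases "0 < y")
        case True
        have "y powr (p - 1) = y powr (p - 2) * y"
          using True powr_mult_base[of y "p - 2"] by (simp add: mult.commute)
        then have "ennreal (y powr (p - 1)) = ennreal (y powr (p - 2)) * ennreal y"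
          using True by (simp add: ennreal_mult)
        moreover have "min (ennreal y) (ennreal c) = ennreal (min y c)"
          using True \<open>0 < c\<close> by (simp add: min_def)
        ultimately show ?thesis
          using True elim \<open>0 < c\<close> by (cases "y < c") (auto simp: indicator_def mult.commute)
      qed (use \<open>0 < c\<close> in \<open>auto simp: indicator_def ennreal_neg\<close>)
    qed
  qed
  also have "\<dots> = ennreal (c powr p / p) + ennreal c * ennreal (c powr (p - 1) / (1 - p))"
    using nn_integral_powr_head[of "p - 1" c] nn_integral_powr_tail[of "p - 2" c] assms
    by (subst nn_integral_add) (auto simp: nn_integral_cmult)
  also have "\<dots> = ennreal (c powr p / (p * (1 - p)))"
  proof -
    have "c * (c powr (p - 1) / (1 - p)) = c powr p / (1 - p)"
      using powr_mult_base[of c "p - 1"] \<open>0 < c\<close> by simp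
    moreover have "c powr p / p + c powr p / (1 - p) = c powr p / (p * (1 - p))"
      using assms by (simp add: field_simps)
    ultimately show ?thesis
      using assms by (simp add: ennreal_mult'[symmetric] flip: ennreal_plus)
  qed
  finally show ?thesis .
qed

lemma Gamma_reflection_real: "Gamma p * Gamma (1 - p) = pi / sin (pi * p)"
proof -
  have "complex_of_real (Gamma p * Gamma (1 - p)) = complex_of_real (pi / sin (pi * p))"
    using Gamma_reflection_complex[of "complex_of_real p"]
    by (simp flip: Gamma_complex_of_real sin_of_real)
  then show ?thesis
    by (simp only: of_real_eq_iff)
qed

lemma Beta_reflection: "Beta (1 - p) p = pi / sin (pi * p)"
  using Gamma_reflection_real[of p] by (simp add: Beta_def mult.commute)

lemma nn_integral_Beta:
  assumes "0 < p" "p < 1"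
  shows "(\<integral>\<^sup>+ t\<in>{0..1}. ennreal (t powr -p * (1 - t) powr (p - 1)) \<partial>lborel) = ennreal (Beta (1 - p) p)"
  using has_integral_Beta_real[of "1 - p" p] assms by (intro nn_integral_has_integral_lebesgue') auto

section \<open>Tails of non-increasing functions\<close>

locale nonincreasing_tail =
  fixes g :: "real \<Rightarrow> real" and x :: real
  assumes g_measurable [measurable]: "g \<in> borel_measurable borel"
    and g_nonneg: "\<And>s. x < s \<Longrightarrow> 0 \<le> g s"
    and g_antimono: "\<And>s t. x \<le> s \<Longrightarrow> s \<le> t \<Longrightarrow> g t \<le> g s"
begin

definition G :: "real \<Rightarrow> real"
  where "G s = enn2real (\<integral>\<^sup>+ t\<in>{x<..<s}. ennreal (g t) \<partial>lborel)"

definition G_total :: ennreal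
  where "G_total = (\<integral>\<^sup>+ t\<in>{x<..}. ennreal (g t) \<partial>lborel)"

lemma g_base_nonneg: "0 \<le> g x"
  using g_nonneg[of "x + 1"] g_antimono[of x "x + 1"] by simp

lemma nn_integral_g_Ioo_le:
  assumes "x \<le> s"
  shows "(\<integral>\<^sup>+ t\<in>{s<..<s'}. ennreal (g t) \<partial>lborel) \<le> ennreal (g x * (s' - s))"
proof (cases "s \<le> s'")
  case True
  have "(\<integral>\<^sup>+ t\<in>{s<..<s'}. ennreal (g t) \<partial>lborel) \<le> (\<integral>\<^sup>+ t. ennreal (g x) * indicator {s<..<s'} t \<partial>lborel)"
    using assms by (intro nn_integral_mono) (auto simp: indicator_def intro!: ennreal_leI g_antimono)
  also have "\<dots> = ennreal (g x * (s' - s))"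
    using True g_base_nonneg by (simp add: nn_integral_cmult_indicator ennreal_mult)
  finally show ?thesis .
qed simp

lemma ennreal_G: "ennreal (G s) = (\<integral>\<^sup>+ t\<in>{x<..<s}. ennreal (g t) \<partial>lborel)"
proof -
  have "(\<integral>\<^sup>+ t\<in>{x<..<s}. ennreal (g t) \<partial>lborel) < top"
    using nn_integral_g_Ioo_le[of x s] ennreal_less_top by (rule le_less_trans) simp
  then show ?thesis
    by (simp add: G_def)
qed

lemma G_nonneg: "0 \<le> G s"
  by (simp add: G_def)

lemma G_base: "G x = 0"
  by (simp add: G_def)

lemma G_mono:
  assumes "s \<le> s'"
  shows "G s \<le> G s'"
proof -
  have "ennreal (G s) \<le> ennreal (G s')"
    unfolding ennreal_G using assms by (intro nn_integral_mono) (auto simp: indicator_def)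
  then show ?thesis
    using G_nonneg[of s'] by simp
qed

lemma G_increment_le:
  assumes "x \<le> s" "s \<le> s'"
  shows "G s' \<le> G s + g x * (s' - s)"
proof -
  have "(\<integral>\<^sup>+ t\<in>{x<..<s'}. ennreal (g t) \<partial>lborel)
      \<le> (\<integral>\<^sup>+ t. ennreal (g t) * indicator {x<..<s} t + ennreal (g t) * indicator {s<..<s'} t \<partial>lborel)"
    by (intro nn_integral_mono_AE) (use AE_lborel_singleton[of s] in \<open>eventually_elim, auto simp: indicator_def\<close>)
  also have "\<dots> \<le> ennreal (G s) + ennreal (g x * (s' - s))"
    using nn_integral_g_Ioo_le[of s s'] assms by (simp add: nn_integral_add ennreal_G add_left_mono)
  finally have "ennreal (G s') \<le> ennreal (G s + g x * (s' - s))"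
    using assms g_base_nonneg G_nonneg[of s] by (simp add: ennreal_G)
  moreover have "0 \<le> G s + g x * (s' - s)"
    using assms g_base_nonneg G_nonneg[of s] by simp
  ultimately show ?thesis
    by (simp only: ennreal_le_iff)
qed

lemma G_continuous: "continuous_on {x..} G"
proof (rule lipschitz_on_continuous_on)
  show "(g x)-lipschitz_on {x..} G"
  proof (rule lipschitz_onI)
    show "dist (G s) (G s') \<le> g x * dist s s'" if "s \<in> {x..}" "s' \<in> {x..}" for s s'
      using that G_increment_le[of s s'] G_increment_le[of s' s] G_mono[of s s'] G_mono[of s' s]
      by (cases "s \<le> s'") (auto simp: dist_real_def)
  qed (rule g_base_nonneg)
qed

lemma G_measurable [measurable]: "G \<in> borel_measurable borel"
  by (rule borel_measurable_mono) (simp add: mono_def G_mono)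

lemma G_lower_bound:
  assumes "x < s"
  shows "g s * (s - x) \<le> G s"
proof -
  have "ennreal (g s * (s - x)) = (\<integral>\<^sup>+ t. ennreal (g s) * indicator {x<..<s} t \<partial>lborel)"
    using assms g_nonneg[OF assms] by (simp add: nn_integral_cmult_indicator ennreal_mult)
  also have "\<dots> \<le> ennreal (G s)"
    unfolding ennreal_G
    by (intro nn_integral_mono) (auto simp: indicator_def intro!: g_antimono ennreal_leI)
  finally show ?thesis
    using G_nonneg[of s] by simp
qed

lemma G_le_total: "ennreal (G s) \<le> G_total"
  unfolding ennreal_G G_total_def by (intro nn_integral_mono) (auto simp: indicator_def)

lemma G_total_SUP: "G_total = (SUP n. ennreal (G (x + real n)))"
proof -
  have "G_total = (\<integral>\<^sup>+ t. (SUP n. ennreal (g t) * indicator {x<..<x + real n} t) \<partial>lborel)"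
    unfolding G_total_def
  proof (intro nn_integral_cong)
    fix t
    have "(SUP n. indicator {x<..<x + real n} t) = (indicator {x<..} t :: ennreal)"
    proof (cases "x < t")
      case True
      obtain n :: nat where "t - x < n"
        using reals_Archimedean2 by blast
      with True have "indicator {x<..<x + real n} t = (1 :: ennreal)"
        by simp
      then have "(SUP n. indicator {x<..<x + real n} t) = (1 :: ennreal)"
        by (intro antisym SUP_least SUP_upper2[of n]) (auto simp: indicator_def)
      with True show ?thesis
        by simp
    qed (simp add: indicator_def)
    then show "ennreal (g t) * indicator {x<..} t = (SUP n. ennreal (g t) * indicator {x<..<x + real n} t)"
      by (simp add: SUP_mult_left_ennreal[symmetric])
  qed
  also have "\<dots> = (SUP n. ennreal (G (x + real n)))"
    unfolding ennreal_G
    by (subst nn_integral_monotone_convergence_SUP)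
       (auto simp: incseq_def le_fun_def split: split_indicator)
  finally show ?thesis .
qed

lemma min_le_nn_integral_sublevel:
  assumes "0 \<le> y"
  shows "min (ennreal y) G_total \<le> (\<integral>\<^sup>+ s\<in>{x<..}. ennreal (g s) * indicator {G s..} y \<partial>lborel)"
proof (cases "ennreal y < G_total")
  case True
  then obtain n where "ennreal y < ennreal (G (x + real n))"
    by (auto simp: G_total_SUP less_SUP_iff)
  then have "y < G (x + real n)"
    using assms by (simp add: ennreal_less_iff)
  then obtain \<sigma> where \<sigma>: "x \<le> \<sigma>" "G \<sigma> = y"
    using IVT'[of G x y "x + real n"] G_base assms continuous_on_subset[OF G_continuous]
    by force
  have "ennreal y = ennreal (G \<sigma>)"
    using \<sigma> by simp
  also have "\<dots> \<le> (\<integral>\<^sup>+ s\<in>{x<..}. ennreal (g s) * indicator {G s..} y \<partial>lborel)"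
    unfolding ennreal_G
    by (intro nn_integral_mono) (auto simp: indicator_def \<sigma>(2)[symmetric] intro: G_mono)
  finally show ?thesis
    by (simp add: min.coboundedI1)
next
  case False
  have "G s \<le> y" for s
  proof -
    have "ennreal (G s) \<le> ennreal y"
      using G_le_total[of s] False by (auto simp: not_less intro: order_trans)
    with assms show ?thesis
      by simp
  qed
  then have "G_total \<le> (\<integral>\<^sup>+ s\<in>{x<..}. ennreal (g s) * indicator {G s..} y \<partial>lborel)"
    unfolding G_total_def by (intro nn_integral_mono) (simp add: indicator_def)
  then show ?thesis
    by (simp add: min.coboundedI2)
qed

lemma nn_integral_sublevel_swap:
  "(\<integral>\<^sup>+ y. ennreal (y powr q) * (\<integral>\<^sup>+ s\<in>{x<..}. ennreal (g s) * indicator {G s..} y \<partial>lborel) \<partial>lborel)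
   = (\<integral>\<^sup>+ s\<in>{x<..}. ennreal (g s) * (\<integral>\<^sup>+ y\<in>{G s..}. ennreal (y powr q) \<partial>lborel) \<partial>lborel)"
proof -
  have "(\<integral>\<^sup>+ y. ennreal (y powr q) * (\<integral>\<^sup>+ s\<in>{x<..}. ennreal (g s) * indicator {G s..} y \<partial>lborel) \<partial>lborel)
      = (\<integral>\<^sup>+ y. \<integral>\<^sup>+ s. ennreal (g s) * indicator {x<..} s * (ennreal (y powr q) * indicator {G s..} y) \<partial>lborel \<partial>lborel)"
    by (subst nn_integral_cmult[symmetric]) (auto intro!: nn_integral_cong simp: mult_ac)
  also have "\<dots> = (\<integral>\<^sup>+ s. \<integral>\<^sup>+ y. ennreal (g s) * indicator {x<..} s * (ennreal (y powr q) * indicator {G s..} y) \<partial>lborel \<partial>lborel)"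
    by (rule lborel_pair.Fubini') measurable
  also have "\<dots> = (\<integral>\<^sup>+ s\<in>{x<..}. ennreal (g s) * (\<integral>\<^sup>+ y\<in>{G s..}. ennreal (y powr q) \<partial>lborel) \<partial>lborel)"
    by (subst nn_integral_cmult) (auto intro!: nn_integral_cong simp: mult_ac)
  finally show ?thesis .
qed

lemma g_mult_tail_le:
  assumes "0 < p" "p < 1" "x < s"
  shows "ennreal (g s) * (ennreal (1 - p) * (\<integral>\<^sup>+ y\<in>{G s..}. ennreal (y powr (p - 2)) \<partial>lborel))
         \<le> ennreal (g s powr p * (s - x) powr (p - 1))"
proof (cases "g s = 0")
  case False
  with g_nonneg[OF assms(3)] have "0 < g s"
    by simp
  with assms have "0 < g s * (s - x)"
    by simp
  with G_lower_bound[OF assms(3)] have "0 < G s"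
    by linarith
  have "ennreal (1 - p) * (\<integral>\<^sup>+ y\<in>{G s..}. ennreal (y powr (p - 2)) \<partial>lborel) = ennreal (G s powr (p - 1))"
    using nn_integral_powr_tail[of "p - 2" "G s"] \<open>0 < G s\<close> assms by (simp add: ennreal_mult[symmetric])
  moreover have "g s * G s powr (p - 1) \<le> g s * (g s * (s - x)) powr (p - 1)"
    using \<open>0 < g s\<close> \<open>0 < g s * (s - x)\<close> G_lower_bound[OF assms(3)] assms
    by (intro mult_left_mono powr_mono2') auto
  moreover have "g s * (g s * (s - x)) powr (p - 1) = g s powr p * (s - x) powr (p - 1)"
    using \<open>0 < g s\<close> powr_mult_base[of "g s" "p - 1"] by (simp add: powr_mult)
  ultimately show ?thesis
    using \<open>0 < g s\<close> by (simp add: ennreal_mult[symmetric])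
qed simp

theorem ennpowr_G_total_le:
  assumes "0 < p" "p < 1"
  shows "ennpowr G_total p
         \<le> ennreal p * (\<integral>\<^sup>+ s\<in>{x<..}. ennreal (g s powr p * (s - x) powr (p - 1)) \<partial>lborel)"
proof (rule ennpowr_leI[OF \<open>0 < p\<close>])
  fix c assume "0 < c" "ennreal c \<le> G_total"
  let ?sub = "\<lambda>y. \<integral>\<^sup>+ s\<in>{x<..}. ennreal (g s) * indicator {G s..} y \<partial>lborel"
  have min_sublevel: "min (ennreal y) (ennreal c) \<le> ?sub y" for y
  proof (cases "0 \<le> y")
    case True
    then show ?thesis
      using min_le_nn_integral_sublevel[OF True] \<open>ennreal c \<le> G_total\<close>
      by (auto intro: order_trans min.mono)
  qed (simp add: ennreal_neg)
  have "ennreal (c powr p)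
      = ennreal p * (ennreal (1 - p) * (\<integral>\<^sup>+ y. ennreal (y powr (p - 2)) * min (ennreal y) (ennreal c) \<partial>lborel))"
    using nn_integral_powr_min[OF assms \<open>0 < c\<close>] assms by (simp add: ennreal_mult[symmetric])
  also have "\<dots> \<le> ennreal p * (ennreal (1 - p) * (\<integral>\<^sup>+ y. ennreal (y powr (p - 2)) * ?sub y \<partial>lborel))"
    using min_sublevel by (intro mult_left_mono nn_integral_mono) auto
  also have "\<dots> = ennreal p * (\<integral>\<^sup>+ s\<in>{x<..}. ennreal (g s) * (ennreal (1 - p) * (\<integral>\<^sup>+ y\<in>{G s..}. ennreal (y powr (p - 2)) \<partial>lborel)) \<partial>lborel)"
    unfolding nn_integral_sublevel_swap
    by (subst nn_integral_cmult[symmetric]) (auto intro!: nn_integral_cong simp: mult_ac)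
  also have "\<dots> \<le> ennreal p * (\<integral>\<^sup>+ s\<in>{x<..}. ennreal (g s powr p * (s - x) powr (p - 1)) \<partial>lborel)"
    using g_mult_tail_le[OF assms]
    by (intro mult_left_mono nn_integral_mono) (auto simp: indicator_def)
  finally show "ennreal (c powr p) \<le> ennreal p * (\<integral>\<^sup>+ s\<in>{x<..}. ennreal (g s powr p * (s - x) powr (p - 1)) \<partial>lborel)" .
qed

end

section \<open>The weighted Hardy inequality\<close>

lemma hardy_lhs_cong:
  assumes "\<And>y. l < y \<Longrightarrow> f y = h y"
  shows "hardy_lhs l p f = hardy_lhs l p h"
proof -
  have "(\<integral>\<^sup>+ y\<in>{x<..}. ennreal (f y) \<partial>lborel) = (\<integral>\<^sup>+ y\<in>{x<..}. ennreal (h y) \<partial>lborel)"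
    if "l < x" for x
    using assms that by (intro nn_integral_cong) (simp add: indicator_def)
  then show ?thesis
    unfolding hardy_lhs_def by (intro nn_integral_cong) (simp add: indicator_def)
qed

lemma hardy_rhs_cong: "(\<And>y. l < y \<Longrightarrow> f y = h y) \<Longrightarrow> hardy_rhs l p f = hardy_rhs l p h"
  unfolding hardy_rhs_def by (intro nn_integral_cong) (auto simp: indicator_def)

lemma hardy_lhs_eq:
  assumes "0 \<le> l"
  shows "hardy_lhs l p f
       = (\<integral>\<^sup>+ x\<in>{l<..}. ennreal (x powr -p) * ennpowr (\<integral>\<^sup>+ y\<in>{x<..}. ennreal (f y) \<partial>lborel) p \<partial>lborel)"
  unfolding hardy_lhs_def using assms
  by (intro nn_integral_cong) (auto simp: indicator_def ennpowr_divide_ennreal)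

lemma hardy_weight_eq:
  assumes "0 \<le> l" "0 < s"
  shows "(\<integral>\<^sup>+ x\<in>{l<..<s}. ennreal (x powr -p * (s - x) powr (p - 1)) \<partial>lborel) = hardy_weight l p s"
proof -
  \<comment> \<open>substitute \<open>x = s t\<close>\<close>
  have "(\<integral>\<^sup>+ x\<in>{l<..<s}. ennreal (x powr -p * (s - x) powr (p - 1)) \<partial>lborel)
      = (\<integral>\<^sup>+ t. ennreal s * (ennreal ((s * t) powr -p * (s - s * t) powr (p - 1)) * indicator {l<..<s} (s * t)) \<partial>lborel)"
    using nn_integral_real_affine[of "\<lambda>x. ennreal (x powr -p * (s - x) powr (p - 1)) * indicator {l<..<s} x" s 0]
      assms by (simp add: nn_integral_cmult)
  also have "\<dots> = hardy_weight l p s"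
    unfolding hardy_weight_def
  proof (intro nn_integral_cong)
    fix t :: real
    have "l < s * t \<and> s * t < s \<longleftrightarrow> l / s < t \<and> t < 1"
      using assms by (auto simp: field_simps)
    moreover have "s * ((s * t) powr -p * (s - s * t) powr (p - 1)) = t powr -p * (1 - t) powr (p - 1)"
      if "0 < t" "t < 1"
    proof -
      have "s - s * t = s * (1 - t)"
        by (simp add: algebra_simps)
      then have "s * ((s * t) powr -p * (s - s * t) powr (p - 1))
          = (s powr 1 * s powr -p * s powr (p - 1)) * (t powr -p * (1 - t) powr (p - 1))"
        using assms that by (simp add: powr_mult mult_ac)
      also have "s powr 1 * s powr -p * s powr (p - 1) = s powr (1 + -p + (p - 1))"
        by (simp only: powr_add)
      also have "\<dots> = 1"
        using assms by simp
      finally show ?thesis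
        by simp
    qed
    moreover have "0 < t" if "l / s < t"
      using that divide_nonneg_pos[OF assms] by linarith
    ultimately show "ennreal s * (ennreal ((s * t) powr -p * (s - s * t) powr (p - 1)) * indicator {l<..<s} (s * t))
        = ennreal (t powr -p * (1 - t) powr (p - 1)) * indicator {l/s<..<1} t"
      using assms by (auto simp: indicator_def ennreal_mult[symmetric])
  qed
  finally show ?thesis .
qed

lemma hardy_rhs_eq:
  assumes [measurable]: "f \<in> borel_measurable borel" and "0 \<le> l"
  shows "(\<integral>\<^sup>+ x\<in>{l<..}. ennreal (x powr -p) * (\<integral>\<^sup>+ s\<in>{x<..}. ennreal (f s powr p * (s - x) powr (p - 1)) \<partial>lborel) \<partial>lborel)
       = hardy_rhs l p f"
proof -
  define \<Phi> where "\<Phi> x s = ennreal (x powr -p) * ennreal (f s powr p * (s - x) powr (p - 1))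
    * indicator {l<..} x * indicator {x<..} s" for x s :: real
  have [measurable]: "(\<lambda>(x, s). \<Phi> x s) \<in> borel_measurable (lborel \<Otimes>\<^sub>M lborel)"
    unfolding \<Phi>_def by measurable
  have "(\<integral>\<^sup>+ x\<in>{l<..}. ennreal (x powr -p) * (\<integral>\<^sup>+ s\<in>{x<..}. ennreal (f s powr p * (s - x) powr (p - 1)) \<partial>lborel) \<partial>lborel)
      = (\<integral>\<^sup>+ x. \<integral>\<^sup>+ s. \<Phi> x s \<partial>lborel \<partial>lborel)"
    unfolding \<Phi>_def
    by (intro nn_integral_cong) (simp add: nn_integral_cmult[symmetric] mult_ac)
  also have "\<dots> = (\<integral>\<^sup>+ s. \<integral>\<^sup>+ x. \<Phi> x s \<partial>lborel \<partial>lborel)"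
    by (rule lborel_pair.Fubini'[symmetric]) measurable
  also have "\<dots> = hardy_rhs l p f"
    unfolding hardy_rhs_def
  proof (intro nn_integral_cong)
    fix s :: real
    show "(\<integral>\<^sup>+ x. \<Phi> x s \<partial>lborel) = ennreal (f s powr p) * hardy_weight l p s * indicator {l<..} s"
    proof (cases "l < s")
      case True
      have "(\<integral>\<^sup>+ x. \<Phi> x s \<partial>lborel)
          = (\<integral>\<^sup>+ x. ennreal (f s powr p) * (ennreal (x powr -p * (s - x) powr (p - 1)) * indicator {l<..<s} x) \<partial>lborel)"
        by (intro nn_integral_cong) (auto simp: \<Phi>_def indicator_def ennreal_mult' mult_ac)
      also have "\<dots> = ennreal (f s powr p) * hardy_weight l p s"
        using True assms by (simp add: nn_integral_cmult hardy_weight_eq)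
      finally show ?thesis
        using True by simp
    next
      case False
      then have "\<Phi> x s = 0" for x
        by (simp add: \<Phi>_def indicator_def)
      with False show ?thesis
        by simp
    qed
  qed
  finally show ?thesis .
qed

lemma hardy_rhs_scaled_eq:
  assumes [measurable]: "f \<in> borel_measurable borel" and "0 \<le> l"
  shows "ennreal p * hardy_rhs l p f
       = (\<integral>\<^sup>+ x\<in>{l<..}. ennreal (x powr -p)
            * (ennreal p * (\<integral>\<^sup>+ s\<in>{x<..}. ennreal (f s powr p * (s - x) powr (p - 1)) \<partial>lborel)) \<partial>lborel)"
  unfolding hardy_rhs_eq[OF assms, symmetric]
  by (subst nn_integral_cmult[symmetric]) (auto intro!: nn_integral_cong simp: mult_ac)

theorem hardy_inequality:
  assumes "admissible l f" "0 \<le> l" "0 < p" "p < 1"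
  shows "hardy_lhs l p f \<le> ennreal p * hardy_rhs l p f"
proof -
  define h where "h y = indicator {l<..} y * f y" for y
  have h_measurable [measurable]: "h \<in> borel_measurable borel"
    using assms(1) unfolding admissible_def h_def by (blast intro: set_borel_measurable_extend)
  have tail_le: "ennpowr (\<integral>\<^sup>+ y\<in>{x<..}. ennreal (h y) \<partial>lborel) p
      \<le> ennreal p * (\<integral>\<^sup>+ s\<in>{x<..}. ennreal (h s powr p * (s - x) powr (p - 1)) \<partial>lborel)"
    if "l < x" for x
  proof -
    interpret nonincreasing_tail h x
      using assms(1) that by unfold_locales (auto simp: admissible_def h_def)
    show ?thesis
      using ennpowr_G_total_le[OF assms(3,4)] by (simp add: G_total_def)
  qed
  have "hardy_lhs l p f = hardy_lhs l p h"
    by (rule hardy_lhs_cong) (simp add: h_def)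
  also have "\<dots> = (\<integral>\<^sup>+ x\<in>{l<..}. ennreal (x powr -p) * ennpowr (\<integral>\<^sup>+ y\<in>{x<..}. ennreal (h y) \<partial>lborel) p \<partial>lborel)"
    using assms(2) by (rule hardy_lhs_eq)
  also have "\<dots> \<le> ennreal p * hardy_rhs l p h"
    unfolding hardy_rhs_scaled_eq[OF h_measurable assms(2)] using tail_le
    by (intro nn_integral_mono) (simp add: indicator_def mult_left_mono)
  also have "hardy_rhs l p h = hardy_rhs l p f"
    by (rule hardy_rhs_cong) (simp add: h_def)
  finally show ?thesis .
qed

section \<open>Sharpness\<close>

lemma admissible_indicator: "admissible l (indicator {l<..b})"
  unfolding admissible_def set_borel_measurable_def by (auto simp: indicator_def)

lemma ennpowr_indicator_tail:
  assumes "l \<le> x" "0 < p"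
  shows "ennpowr (\<integral>\<^sup>+ y\<in>{x<..}. ennreal (indicator {l<..b} y) \<partial>lborel) p
       = ennreal p * (\<integral>\<^sup>+ s\<in>{x<..}. ennreal (indicator {l<..b} s powr p * (s - x) powr (p - 1)) \<partial>lborel)"
proof (cases "x < b")
  case True
  have "(\<integral>\<^sup>+ y\<in>{x<..}. ennreal (indicator {l<..b} y) \<partial>lborel) = ennreal (b - x)"
    using assms True by (subst nn_integral_cong[where v = "indicator {x<..b}"]) (auto simp: indicator_def)
  moreover have "(\<integral>\<^sup>+ s\<in>{x<..}. ennreal (indicator {l<..b} s powr p * (s - x) powr (p - 1)) \<partial>lborel)
      = ennreal ((b - x) powr p / p)"
    using assms nn_integral_powr_shift[OF True assms(2)]
    by (subst nn_integral_cong[where v = "\<lambda>s. ennreal ((s - x) powr (p - 1)) * indicator {x<..b} s"])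
       (auto simp: indicator_def)
  ultimately show ?thesis
    using True assms(2) by (simp add: ennpowr_ennreal ennreal_mult[symmetric])
next
  case False
  then have "(\<lambda>y. ennreal (indicator {l<..b} y) * indicator {x<..} y) = (\<lambda>_. 0)"
    and "(\<lambda>s. ennreal (indicator {l<..b} s powr p * (s - x) powr (p - 1)) * indicator {x<..} s) = (\<lambda>_. 0)"
    by (auto simp: indicator_def fun_eq_iff)
  then show ?thesis
    by simp
qed

lemma hardy_lhs_indicator:
  assumes "0 \<le> l" "0 < p"
  shows "hardy_lhs l p (indicator {l<..b}) = ennreal p * hardy_rhs l p (indicator {l<..b})"
  unfolding hardy_lhs_eq[OF assms(1)]
    hardy_rhs_scaled_eq[OF borel_measurable_indicator[OF greaterThanAtMost_borel] assms(1)]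
  using ennpowr_indicator_tail[OF _ assms(2)]
  by (intro nn_integral_cong) (simp add: indicator_def)

lemma hardy_weight_le_Beta:
  assumes "0 \<le> l" "0 < x" "0 < p" "p < 1"
  shows "hardy_weight l p x \<le> ennreal (Beta (1 - p) p)"
proof -
  have "0 \<le> l / x"
    using assms by simp
  then have "hardy_weight l p x \<le> (\<integral>\<^sup>+ t\<in>{0..1}. ennreal (t powr -p * (1 - t) powr (p - 1)) \<partial>lborel)"
    unfolding hardy_weight_def by (intro nn_integral_mono) (auto simp: indicator_def)
  then show ?thesis
    using nn_integral_Beta[OF assms(3,4)] by simp
qed

lemma hardy_weight_ge:
  assumes "0 \<le> l" "l < x" "0 \<le> p" "p \<le> 1"
  shows "ennreal (1 - l / x) \<le> hardy_weight l p x"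
proof -
  have "1 \<le> t powr -p * (1 - t) powr (p - 1)" if "0 < t" "t < 1" for t
  proof -
    have "1 \<le> t powr -p" "1 \<le> (1 - t) powr (p - 1)"
      using that assms(3,4) powr_mono2'[of "-p" t 1] powr_mono2'[of "p - 1" "1 - t" 1] by auto
    then show ?thesis
      by (metis mult_mono' mult_1 zero_le_one)
  qed
  moreover have "0 \<le> l / x"
    using assms by simp
  ultimately have "(\<integral>\<^sup>+ t. indicator {l/x<..<1} t \<partial>lborel) \<le> hardy_weight l p x"
    unfolding hardy_weight_def by (intro nn_integral_mono) (auto simp: indicator_def)
  then show ?thesis
    using assms by simp
qed

lemma hardy_rhs_indicator_finite:
  assumes "0 \<le> l" "l < b" "0 < p" "p < 1"
  shows "hardy_rhs l p (indicator {l<..b}) < \<infinity>"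
proof -
  have "hardy_rhs l p (indicator {l<..b}) \<le> (\<integral>\<^sup>+ x. ennreal (Beta (1 - p) p) * indicator {l<..b} x \<partial>lborel)"
    unfolding hardy_rhs_def using hardy_weight_le_Beta[OF assms(1) _ assms(3,4)] assms(1)
    by (intro nn_integral_mono) (auto simp: indicator_def)
  also have "\<dots> < \<infinity>"
    using assms by (simp add: nn_integral_cmult_indicator ennreal_mult_less_top)
  finally show ?thesis .
qed

lemma hardy_rhs_indicator_pos:
  assumes "0 \<le> l" "2 * l < b" "0 < p" "p < 1"
  shows "0 < hardy_rhs l p (indicator {l<..b})"
proof -
  have "0 < ennreal (1/2) * ennreal (b - 2 * l)"
    using assms by (simp add: ennreal_zero_less_mult_iff ennreal_inverse_positive)
  also have "\<dots> = (\<integral>\<^sup>+ x. ennreal (1/2) * indicator {2 * l<..<b} x \<partial>lborel)"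
    using assms by (simp add: nn_integral_cmult_indicator)
  also have "\<dots> \<le> hardy_rhs l p (indicator {l<..b})"
    unfolding hardy_rhs_def
  proof (intro nn_integral_mono)
    fix x :: real
    have "ennreal (1/2) \<le> hardy_weight l p x" if "2 * l < x"
    proof -
      have "1/2 \<le> 1 - l / x"
        using that assms(1) by (simp add: field_simps)
      then have "ennreal (1/2) \<le> ennreal (1 - l / x)"
        by (rule ennreal_leI)
      also have "\<dots> \<le> hardy_weight l p x"
        using that assms by (intro hardy_weight_ge) auto
      finally show ?thesis .
    qed
    then show "ennreal (1/2) * indicator {2 * l<..<b} x
        \<le> ennreal (indicator {l<..b} x powr p) * hardy_weight l p x * indicator {l<..} x"
      using assms by (auto simp: indicator_def)
  qed
  finally show ?thesis .
qed

lemma hardy_weight_zero: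
  assumes "0 < p" "p < 1"
  shows "hardy_weight 0 p x = ennreal (pi / sin (pi * p))"
proof -
  \<comment> \<open>the endpoints do not matter: the integrand is \<open>0\<close> there since \<open>0 powr a = 0\<close>\<close>
  have "hardy_weight 0 p x = (\<integral>\<^sup>+ t\<in>{0..1}. ennreal (t powr -p * (1 - t) powr (p - 1)) \<partial>lborel)"
    unfolding hardy_weight_def by (intro nn_integral_cong) (auto simp: indicator_def)
  then show ?thesis
    using nn_integral_Beta[OF assms] by (simp add: Beta_reflection)
qed

lemma hardy_rhs_zero:
  assumes "set_borel_measurable lborel {0<..} f" "0 < p" "p < 1"
  shows "hardy_rhs 0 p f = ennreal (pi / sin (pi * p)) * (\<integral>\<^sup>+ x\<in>{0<..}. ennreal (f x powr p) \<partial>lborel)"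
proof -
  have [measurable]: "(\<lambda>y. indicator {0<..} y * f y) \<in> borel_measurable borel"
    using assms(1) by (rule set_borel_measurable_extend)
  have "(\<lambda>x. ennreal (f x powr p) * indicator {0<..} x)
      = (\<lambda>x. ennreal ((indicator {0<..} x * f x) powr p) * indicator {0<..} x)"
    by (auto simp: indicator_def)
  then have "(\<lambda>x. ennreal (f x powr p) * indicator {0<..} x) \<in> borel_measurable lborel"
    by simp
  then show ?thesis
    unfolding hardy_rhs_def hardy_weight_zero[OF assms(2,3)]
    by (subst nn_integral_cmult[symmetric]) (auto intro!: nn_integral_cong simp: mult_ac)
qed

theorem mainTheorem13:
  fixes p l :: real
  assumes "0 < p" "p < 1" "0 \<le> l"
  shows "(\<forall>f. admissible l f \<longrightarrow>
            hardy_lhs l p f \<le> ennreal p * hardy_rhs l p f)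
       \<and> (\<forall>c::real. c < p \<longrightarrow>
            (\<exists>f. admissible l f \<and> hardy_lhs l p f > ennreal c * hardy_rhs l p f))
       \<and> (\<forall>f. admissible 0 f \<longrightarrow>
            hardy_lhs 0 p f \<le> ennreal (pi * p / sin (pi * p)) *
                               (\<integral>\<^sup>+ x \<in> {0<..}. ennreal (f x powr p) \<partial>lborel))
       \<and> (\<forall>c::real. c < pi * p / sin (pi * p) \<longrightarrow>
            (\<exists>f. admissible 0 f \<and>
                 hardy_lhs 0 p f > ennreal c * (\<integral>\<^sup>+ x \<in> {0<..}. ennreal (f x powr p) \<partial>lborel)))"
proof -
  let ?K = "pi * p / sin (pi * p)"
  let ?I = "\<lambda>f. \<integral>\<^sup>+ x\<in>{0<..}. ennreal (f x powr p) \<partial>lborel"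
  let ?f\<^sub>0 = "\<lambda>l. indicator {l<..2 * l + 1} :: real \<Rightarrow> real"
  have "0 < sin (pi * p)"
    using assms by (intro sin_gt_zero) auto
  then have K: "ennreal p * ennreal (pi / sin (pi * p)) = ennreal ?K"
    using assms by (simp add: ennreal_mult[symmetric])
  have sharp_p: "ennreal c * hardy_rhs l p (?f\<^sub>0 l) < hardy_lhs l p (?f\<^sub>0 l)" if "c < p" for c
    unfolding hardy_lhs_indicator[OF assms(3,1)]
    using that assms hardy_rhs_indicator_pos[of l "2 * l + 1"] hardy_rhs_indicator_finite[of l "2 * l + 1"]
    by (intro ennreal_mult_strict_right_mono_real) auto
  have zero_le: "hardy_lhs 0 p f \<le> ennreal ?K * ?I f" if "admissible 0 f" for f
    using hardy_inequality[OF that _ assms(1,2)] hardy_rhs_zero[OF _ assms(1,2), of f] that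
    by (simp add: admissible_def mult.assoc[symmetric] K)
  have "?I (?f\<^sub>0 0) = 1"
    by (subst nn_integral_cong[where v = "indicator {0<..1}"]) (auto simp: indicator_def)
  then have zero_lhs: "hardy_lhs 0 p (?f\<^sub>0 0) = ennreal ?K * ?I (?f\<^sub>0 0)"
    using hardy_lhs_indicator[of 0 p 1] admissible_indicator[of 0 1] assms
      hardy_rhs_zero[OF _ assms(1,2), of "?f\<^sub>0 0"]
    by (simp add: admissible_def mult.assoc[symmetric] K)
  have sharp_K: "ennreal c * ?I (?f\<^sub>0 0) < hardy_lhs 0 p (?f\<^sub>0 0)" if "c < ?K" for c
    unfolding zero_lhs using that \<open>0 < sin (pi * p)\<close> \<open>?I (?f\<^sub>0 0) = 1\<close> assms
    by (intro ennreal_mult_strict_right_mono_real) auto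
  show ?thesis
    using hardy_inequality[OF _ assms(3,1,2)] sharp_p zero_le sharp_K admissible_indicator by blast
qed

end
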